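(* For every integer $N\ge 0$, let $T_{2\times 3}(5,N)$ be the number of tilings of a $5\times n$ rectangle, $n=6N/5$, by $N$ tiles of size $2\times 3$ (and $0$ if $6N/5\notin\mathbb{Z}$). Then, as formal power series, \[ \sum_{N\ge 0} T_{2\times 3}(5,N)\,z^N=\frac{1}{1-2z^5}. \]
   Context: A tiling of an $m\times n$ rectangle (width $m$, length $n$, made of $mn$ unit squares) by $a\times b$ tiles is a partition of the rectangle into non-overlapping axis-parallel $a\times b$ rectangles with integer corner coordinates, each placed in either of its two orientations. Tilings related by reflections or rotations of the rectangle are counted as distinct. The empty tiling counts once for $N=0$. *)

theory Defs
  imports "HOL-Computational_Algebra.Formal_Power_Series"
begin

definition rect :: "nat \<Rightarrow> nat \<Rightarrow> nat \<Rightarrow> nat \<Rightarrow> (nat \<times> nat) set" where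
  "rect x y w h = {x..<x+w} \<times> {y..<y+h}"

definition is_tile :: "nat \<Rightarrow> nat \<Rightarrow> (nat \<times> nat) set \<Rightarrow> bool" where
  "is_tile a b T \<longleftrightarrow> (\<exists>x y. T = rect x y a b \<or> T = rect x y b a)"

definition tilings :: "nat \<Rightarrow> nat \<Rightarrow> nat \<Rightarrow> nat \<Rightarrow> (nat \<times> nat) set set set" where
  "tilings a b m n = {P. (\<forall>T\<in>P. is_tile a b T) \<and>
       (\<forall>S\<in>P. \<forall>T\<in>P. S \<noteq> T \<longrightarrow> S \<inter> T = {}) \<and>
       \<Union>P = {0..<m} \<times> {0..<n}}"

definition tile_count :: "nat \<Rightarrow> nat \<Rightarrow> nat \<Rightarrow> nat \<Rightarrow> nat" where
  "tile_count a b m N =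
     (if m dvd a * b * N then card {P \<in> tilings a b m (a * b * N div m). card P = N} else 0)"

end

theory Submission
  imports Defs
begin

text \<open>Read a tiling of the 5 \<times> n strip from its bottom edge. The tile covering the corner cell is a
  2 \<times> 3 tile in one of its two orientations, and each choice forces, cell by cell, a complete tiling of
  the bottom 5 \<times> 6 block: the next uncovered cell admits only one tile that does not overlap the tiles
  already placed or stick out of the strip. Removing this block and shifting down leaves a tiling of the
  5 \<times> (n - 6) strip, and conversely either block can be stacked under any such tiling. So the
  5 \<times> 6k strip has exactly 2^k tilings. Counting cells, a tiling of the 5 \<times> n strip has 5n/6 tiles,
  so T(5, N) is 2^(N/5) when 5 divides N and 0 otherwise, which are the coefficients of
  1/(1 - 2z^5).\<close>

subsection \<open>Rectangles and tilings\<close>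

lemma mem_rect_iff [simp]:
  "(i, j) \<in> rect x y w h \<longleftrightarrow> x \<le> i \<and> i < x + w \<and> y \<le> j \<and> j < y + h"
  by (auto simp: rect_def)

lemma rect_origin: "rect 0 0 m n = {0..<m} \<times> {0..<n}"
  by (simp add: rect_def)

lemma rect_eq_iff:
  assumes "0 < w" "0 < h" "0 < w'" "0 < h'"
  shows "rect x y w h = rect x' y' w' h' \<longleftrightarrow> x = x' \<and> y = y' \<and> w = w' \<and> h = h'"
proof
  assume eq: "rect x y w h = rect x' y' w' h'"
  have "(x, y) \<in> rect x y w h" "(x + w - 1, y + h - 1) \<in> rect x y w h"
    "(x', y') \<in> rect x' y' w' h'" "(x' + w' - 1, y' + h' - 1) \<in> rect x' y' w' h'"
    using assms by auto
  then have "(x, y) \<in> rect x' y' w' h'" "(x + w - 1, y + h - 1) \<in> rect x' y' w' h'"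
    "(x', y') \<in> rect x y w h" "(x' + w' - 1, y' + h' - 1) \<in> rect x y w h"
    unfolding eq by auto
  then show "x = x' \<and> y = y' \<and> w = w' \<and> h = h'" by auto
qed simp

lemma rect_disjoint_iff:
  "rect x y w h \<inter> rect x' y' w' h' = {} \<longleftrightarrow>
     w = 0 \<or> h = 0 \<or> w' = 0 \<or> h' = 0 \<or> x + w \<le> x' \<or> x' + w' \<le> x \<or> y + h \<le> y' \<or> y' + h' \<le> y"
proof
  assume "rect x y w h \<inter> rect x' y' w' h' = {}"
  then have "(max x x', max y y') \<notin> rect x y w h \<inter> rect x' y' w' h'" by blast
  then show "w = 0 \<or> h = 0 \<or> w' = 0 \<or> h' = 0 \<or> x + w \<le> x' \<or> x' + w' \<le> x \<or> y + h \<le> y' \<or> y' + h' \<le> y"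
    by auto
qed (auto simp: rect_def)

lemma card_rect: "card (rect x y w h) = w * h"
  by (simp add: rect_def card_cartesian_product)

lemma is_tile_nonempty:
  assumes "is_tile a b T" "0 < a" "0 < b"
  shows "T \<noteq> {}"
proof -
  obtain x y where "T = rect x y a b \<or> T = rect x y b a"
    using assms(1) unfolding is_tile_def by blast
  then have "(x, y) \<in> T"
    using assms(2,3) by auto
  then show ?thesis by blast
qed

lemma tilingsD:
  assumes "P \<in> tilings a b m n"
  shows "\<And>T. T \<in> P \<Longrightarrow> is_tile a b T" "\<And>S T. S \<in> P \<Longrightarrow> T \<in> P \<Longrightarrow> S \<noteq> T \<Longrightarrow> S \<inter> T = {}"
    "\<Union>P = {0..<m} \<times> {0..<n}"
  using assms by (auto simp: tilings_def)

lemma finite_tilings: "finite (tilings a b m n)"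
  by (rule finite_subset[of _ "Pow (Pow ({0..<m} \<times> {0..<n}))"]) (auto simp: tilings_def)

lemma tilings_height_0:
  assumes "0 < a" "0 < b"
  shows "tilings a b m 0 = {{}}"
proof -
  have "P = {}" if P: "P \<in> tilings a b m 0" for P
  proof -
    have "\<Union>P = {}"
      using tilingsD(3)[OF P] by simp
    then show ?thesis
      using is_tile_nonempty[OF tilingsD(1)[OF P] assms] by auto
  qed
  then show ?thesis
    by (auto simp: tilings_def)
qed

lemma card_tiling:
  assumes P: "P \<in> tilings a b m n"
  shows "card P * (a * b) = m * n"
proof -
  have finite_tiles: "finite T" if "T \<in> P" for T
    using that tilingsD(3)[OF P] by (auto intro: finite_subset[of _ "{0..<m} \<times> {0..<n}"])
  have "card T = a * b" if "T \<in> P" for T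
    using tilingsD(1)[OF P that] by (auto simp: is_tile_def card_rect)
  then have "card P * (a * b) = sum card P"
    by simp
  also have "\<dots> = card (\<Union>P)"
    using tilingsD(2)[OF P] finite_tiles
    by (intro card_Union_disjoint[symmetric]) (auto simp: pairwise_def disjnt_def)
  finally show ?thesis
    using tilingsD(3)[OF P] by simp
qed

lemma tiling_covers_cell:
  assumes P: "P \<in> tilings a b m n" and "0 < a" "0 < b" "i < m" "j < n"
  obtains x y w h where "w = a \<and> h = b \<or> w = b \<and> h = a" "rect x y w h \<in> P"
    "x \<le> i" "i < x + w" "y \<le> j" "j < y + h" "x + w \<le> m" "y + h \<le> n"
proof -
  have "(i, j) \<in> \<Union>P"
    using assms tilingsD(3)[OF P] by simp
  then obtain T where T: "T \<in> P" "(i, j) \<in> T"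
    by blast
  obtain x y w h where shape: "w = a \<and> h = b \<or> w = b \<and> h = a" and T_rect: "T = rect x y w h"
    using tilingsD(1)[OF P T(1)] unfolding is_tile_def by blast
  have "0 < w" "0 < h"
    using shape assms by auto
  then have "(x + w - 1, y + h - 1) \<in> T"
    using T_rect by auto
  then have "(x + w - 1, y + h - 1) \<in> {0..<m} \<times> {0..<n}"
    using T(1) tilingsD(3)[OF P] by blast
  then have "x + w \<le> m" "y + h \<le> n"
    using \<open>0 < w\<close> \<open>0 < h\<close> by auto
  moreover have "x \<le> i" "i < x + w" "y \<le> j" "j < y + h"
    using T(2) T_rect by auto
  ultimately show thesis
    using that shape T T_rect by blast
qed

lemma tiling_tiles_apart:
  assumes P: "P \<in> tilings a b m n" and "0 < a" "0 < b"
    and "w = a \<and> h = b \<or> w = b \<and> h = a" "rect x y w h \<in> P"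
    and "w' = a \<and> h' = b \<or> w' = b \<and> h' = a" "rect x' y' w' h' \<in> P"
  shows "x = x' \<and> y = y' \<and> w = w' \<and> h = h' \<or>
    x + w \<le> x' \<or> x' + w' \<le> x \<or> y + h \<le> y' \<or> y' + h' \<le> y"
  using tilingsD(2)[OF P, of "rect x y w h" "rect x' y' w' h'"] assms
    rect_eq_iff[of w h w' h' x y x' y'] rect_disjoint_iff[of x y w h x' y' w' h']
  by auto

subsection \<open>Stacking tilings\<close>

definition shift_up :: "nat \<Rightarrow> (nat \<times> nat) set \<Rightarrow> (nat \<times> nat) set" where
  "shift_up h T = (\<lambda>(i, j). (i, j + h)) ` T"

lemma inj_shift_up: "inj (shift_up h)"
  using inj_on_image_Pow[of "\<lambda>(i, j). (i, j + h)" UNIV]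
  by (simp add: shift_up_def inj_on_def)

lemma shift_up_rect: "shift_up h (rect x y w k) = rect x (y + h) w k"
proof (rule set_eqI)
  fix c :: "nat \<times> nat"
  obtain i j where c: "c = (i, j)" by fastforce
  show "c \<in> shift_up h (rect x y w k) \<longleftrightarrow> c \<in> rect x (y + h) w k"
    by (auto simp: c shift_up_def image_iff intro!: bexI[of _ "(i, j - h)"])
qed

lemma shift_up_Union: "shift_up h (\<Union>Q) = \<Union>(shift_up h ` Q)"
  by (auto simp: shift_up_def)

lemma shift_up_Int: "shift_up h (S \<inter> T) = shift_up h S \<inter> shift_up h T"
  unfolding shift_up_def by (rule image_Int) (auto simp: inj_def)

lemma is_tile_shift_up: "is_tile a b T \<Longrightarrow> is_tile a b (shift_up h T)"
  unfolding is_tile_def by (metis shift_up_rect)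

lemma is_tile_above_shift_up:
  assumes "is_tile a b T" "0 < a" "0 < b" "\<And>i j. (i, j) \<in> T \<Longrightarrow> h \<le> j"
  obtains T' where "is_tile a b T'" "T = shift_up h T'"
proof -
  obtain x y w k where shape: "w = a \<and> k = b \<or> w = b \<and> k = a" and T: "T = rect x y w k"
    using assms(1) unfolding is_tile_def by blast
  then have "(x, y) \<in> T" using assms(2,3) by auto
  then have "h \<le> y"
    using assms(4) by blast
  then have "T = shift_up h (rect x (y - h) w k)"
    by (simp add: T shift_up_rect)
  moreover have "is_tile a b (rect x (y - h) w k)"
    using shape unfolding is_tile_def by blast
  ultimately show thesis using that by blast
qed

lemma is_tile_shift_up_iff:
  assumes "0 < a" "0 < b"
  shows "is_tile a b (shift_up h T) \<longleftrightarrow> is_tile a b T"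
proof
  assume "is_tile a b (shift_up h T)"
  moreover have "h \<le> j" if "(i, j) \<in> shift_up h T" for i j
    using that by (auto simp: shift_up_def)
  ultimately obtain T' where "is_tile a b T'" "shift_up h T = shift_up h T'"
    using is_tile_above_shift_up assms by blast
  then show "is_tile a b T"
    using inj_shift_up by (metis injD)
qed (rule is_tile_shift_up)

lemma stacked_tiles_disjoint:
  assumes A: "A \<in> tilings a b m h" and Q: "Q \<in> tilings a b m n"
    and "S \<in> A" "T \<in> shift_up h ` Q"
  shows "S \<inter> T = {}"
proof -
  have "S \<subseteq> rect 0 0 m h"
    using \<open>S \<in> A\<close> tilingsD(3)[OF A] by (auto simp: rect_origin)
  moreover have "T \<subseteq> shift_up h (\<Union>Q)"
    using \<open>T \<in> shift_up h ` Q\<close> by (auto simp: shift_up_Union)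
  moreover have "\<Union>Q = rect 0 0 m n"
    using tilingsD(3)[OF Q] by (simp add: rect_origin)
  moreover have "rect 0 0 m h \<inter> rect 0 h m n = {}"
    by (simp add: rect_disjoint_iff)
  ultimately show ?thesis
    by (auto simp: shift_up_rect)
qed

lemma stack_tilings:
  assumes A: "A \<in> tilings a b m h" and Q: "Q \<in> tilings a b m n"
  shows "A \<union> shift_up h ` Q \<in> tilings a b m (h + n)"
proof -
  have shifted_region: "\<Union>(shift_up h ` Q) = rect 0 h m n"
    using tilingsD(3)[OF Q] shift_up_Union[of h Q] shift_up_rect[of h 0 0 m n]
    by (simp add: rect_origin)
  have upper_upper: "S \<inter> T = {}"
    if ST: "S \<in> shift_up h ` Q" "T \<in> shift_up h ` Q" "S \<noteq> T" for S T
  proof -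
    obtain S' T' where S'T': "S' \<in> Q" "T' \<in> Q" "S = shift_up h S'" "T = shift_up h T'"
      using ST(1,2) by blast
    then have "S' \<inter> T' = {}"
      using ST(3) tilingsD(2)[OF Q] by blast
    then show ?thesis
      using S'T' shift_up_Int[of h S' T'] by (simp add: shift_up_def)
  qed
  show ?thesis
    unfolding tilings_def
  proof (intro CollectI conjI ballI impI)
    fix T assume "T \<in> A \<union> shift_up h ` Q"
    then show "is_tile a b T"
      using tilingsD(1)[OF A] tilingsD(1)[OF Q] is_tile_shift_up by blast
  next
    fix S T assume "S \<in> A \<union> shift_up h ` Q" "T \<in> A \<union> shift_up h ` Q" "S \<noteq> T"
    then show "S \<inter> T = {}"
      using tilingsD(2)[OF A] stacked_tiles_disjoint[OF A Q] upper_upper by blast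
  next
    have "rect 0 0 m h \<union> rect 0 h m n = {0..<m} \<times> {0..<h + n}"
      by (auto simp: rect_def)
    then show "\<Union>(A \<union> shift_up h ` Q) = {0..<m} \<times> {0..<h + n}"
      using tilingsD(3)[OF A] shifted_region by (simp add: rect_origin)
  qed
qed

lemma unstack_tiling:
  assumes "0 < a" "0 < b" and A: "A \<in> tilings a b m h" and P: "P \<in> tilings a b m (h + n)"
    and "A \<subseteq> P"
  shows "\<exists>Q \<in> tilings a b m n. P = A \<union> shift_up h ` Q"
proof -
  have A_region: "\<Union>A = rect 0 0 m h"
    using tilingsD(3)[OF A] by (simp add: rect_origin)
  have "\<Union>(P - A) = \<Union>P - \<Union>A"
  proof
    show "\<Union>(P - A) \<subseteq> \<Union>P - \<Union>A"
    proof
      fix c assume "c \<in> \<Union>(P - A)"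
      then obtain T where T: "T \<in> P - A" "c \<in> T"
        by blast
      have "c \<notin> S" if "S \<in> A" for S
        using that T \<open>A \<subseteq> P\<close> tilingsD(2)[OF P, of S T] by blast
      then show "c \<in> \<Union>P - \<Union>A"
        using T by blast
    qed
  qed blast
  also have "\<dots> = rect 0 h m n"
    using tilingsD(3)[OF P] A_region by (auto simp: rect_def)
  finally have upper: "\<Union>(P - A) = rect 0 h m n" .
  define Q where "Q = {T. shift_up h T \<in> P - A}"
  have "P - A \<subseteq> range (shift_up h)"
  proof
    fix T assume T: "T \<in> P - A"
    have "h \<le> j" if "(i, j) \<in> T" for i j
    proof -
      have "(i, j) \<in> \<Union>(P - A)"
        using T that by blast
      then show ?thesis
        using upper by simp
    qed
    then show "T \<in> range (shift_up h)"
      using is_tile_above_shift_up[OF tilingsD(1)[OF P] \<open>0 < a\<close> \<open>0 < b\<close>] T by blast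
  qed
  then have shifted_Q: "shift_up h ` Q = P - A"
    unfolding Q_def by blast
  have "Q \<in> tilings a b m n"
    unfolding tilings_def
  proof (intro CollectI conjI ballI impI)
    fix T assume "T \<in> Q"
    then show "is_tile a b T"
      using tilingsD(1)[OF P] is_tile_shift_up_iff[OF \<open>0 < a\<close> \<open>0 < b\<close>] unfolding Q_def by blast
  next
    fix S T assume ST: "S \<in> Q" "T \<in> Q" "S \<noteq> T"
    then have "shift_up h S \<noteq> shift_up h T"
      by (metis injD inj_shift_up)
    then have "shift_up h (S \<inter> T) = {}"
      using ST(1,2) tilingsD(2)[OF P] unfolding Q_def shift_up_Int by blast
    then show "S \<inter> T = {}"
      by (simp add: shift_up_def)
  next
    have "shift_up h (\<Union>Q) = shift_up h (rect 0 0 m n)"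
      using upper shifted_Q by (simp add: shift_up_Union shift_up_rect)
    then show "\<Union>Q = {0..<m} \<times> {0..<n}"
      using injD[OF inj_shift_up] by (simp add: rect_origin)
  qed
  with shifted_Q \<open>A \<subseteq> P\<close> show ?thesis by blast
qed

lemma card_tilings_containing:
  assumes "0 < a" "0 < b" and A: "A \<in> tilings a b m h"
  shows "card {P \<in> tilings a b m (h + n). A \<subseteq> P} = card (tilings a b m n)"
proof -
  have "{P \<in> tilings a b m (h + n). A \<subseteq> P} = (\<lambda>Q. A \<union> shift_up h ` Q) ` tilings a b m n"
    using stack_tilings[OF A] unstack_tiling[OF assms] by blast
  moreover have "inj_on (\<lambda>Q. A \<union> shift_up h ` Q) (tilings a b m n)"
  proof (rule inj_onI)
    fix Q Q' assume Q: "Q \<in> tilings a b m n" and Q': "Q' \<in> tilings a b m n"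
      and eq: "A \<union> shift_up h ` Q = A \<union> shift_up h ` Q'"
    have "A \<inter> shift_up h ` R = {}" if R: "R \<in> tilings a b m n" for R
    proof -
      have "T \<notin> shift_up h ` R" if T: "T \<in> A" for T
      proof
        assume "T \<in> shift_up h ` R"
        then have "T \<inter> T = {}"
          by (rule stacked_tiles_disjoint[OF A R T])
        then show False
          using is_tile_nonempty[OF tilingsD(1)[OF A T] assms(1,2)] by simp
      qed
      then show ?thesis
        by blast
    qed
    then have "shift_up h ` Q = shift_up h ` Q'"
      using eq Q Q' by blast
    then show "Q = Q'"
      by (simp add: inj_image_eq_iff[OF inj_shift_up])
  qed
  ultimately show ?thesis
    by (simp add: card_image)
qed

subsection \<open>Tilings of the 5 \<times> n strip by 2 \<times> 3 tiles\<close>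

text \<open>The two tilings of the 5 \<times> 6 rectangle, mirror images of each other; they differ in the
  orientation of the tile in the corner.\<close>

definition block_left :: "(nat \<times> nat) set set" where
  "block_left = {rect 0 0 2 3, rect 2 0 3 2, rect 2 2 3 2, rect 0 3 2 3, rect 2 4 3 2}"

definition block_right :: "(nat \<times> nat) set set" where
  "block_right = {rect 0 0 3 2, rect 3 0 2 3, rect 0 2 3 2, rect 3 3 2 3, rect 0 4 3 2}"

lemma block_left_tiling: "block_left \<in> tilings 2 3 5 6"
  unfolding tilings_def block_left_def is_tile_def
  by (auto simp: rect_disjoint_iff)

lemma block_right_tiling: "block_right \<in> tilings 2 3 5 6"
  unfolding tilings_def block_right_def is_tile_def
  by (auto simp: rect_disjoint_iff)

lemma corner_tile:
  assumes P: "P \<in> tilings 2 3 5 n" and "0 < n"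
  shows "rect 0 0 2 3 \<in> P \<or> rect 0 0 3 2 \<in> P"
proof -
  obtain x y w h where "w = 2 \<and> h = 3 \<or> w = 3 \<and> h = 2" "rect x y w h \<in> P"
    "x \<le> 0" "0 < x + w" "y \<le> 0" "0 < y + h" "x + w \<le> 5" "y + h \<le> n"
    by (rule tiling_covers_cell[OF P, of 0 0]) (use \<open>0 < n\<close> in simp_all)
  then show ?thesis
    by auto
qed

lemma block_left_forced:
  assumes P: "P \<in> tilings 2 3 5 n" and "6 \<le> n" and k0: "rect 0 0 2 3 \<in> P"
  shows "block_left \<subseteq> P"
proof -
  note cover = tiling_covers_cell[OF P zero_less_numeral zero_less_numeral]
  note apart = tiling_tiles_apart[OF P zero_less_numeral zero_less_numeral]
  have k1: "rect 2 0 3 2 \<in> P"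
  proof -
    obtain x y w h where t: "w = 2 \<and> h = 3 \<or> w = 3 \<and> h = 2" "rect x y w h \<in> P"
      "x \<le> 2" "2 < x + w" "y \<le> 0" "0 < y + h" "x + w \<le> 5" "y + h \<le> n"
      by (rule cover[of 2 0]) (use \<open>6 \<le> n\<close> in simp_all)
    obtain x' y' w' h' where t': "w' = 2 \<and> h' = 3 \<or> w' = 3 \<and> h' = 2" "rect x' y' w' h' \<in> P"
      "x' \<le> 4" "4 < x' + w'" "y' \<le> 0" "0 < y' + h'" "x' + w' \<le> 5" "y' + h' \<le> n"
      by (rule cover[of 4 0]) (use \<open>6 \<le> n\<close> in simp_all)
    have "x = 2 \<and> y = 0"
      using apart[OF _ k0 t(1,2)] t t' by (elim disjE) linarith+
    then have "x = 2 \<and> y = 0 \<and> w = 3 \<and> h = 2"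
      using apart[OF t(1,2) t'(1,2)] t t' by (elim disjE) linarith+
    with t(2) show ?thesis by simp
  qed
  have k2: "rect 2 2 3 2 \<in> P"
  proof -
    obtain x y w h where t: "w = 2 \<and> h = 3 \<or> w = 3 \<and> h = 2" "rect x y w h \<in> P"
      "x \<le> 2" "2 < x + w" "y \<le> 2" "2 < y + h" "x + w \<le> 5" "y + h \<le> n"
      by (rule cover[of 2 2]) (use \<open>6 \<le> n\<close> in simp_all)
    obtain x' y' w' h' where t': "w' = 2 \<and> h' = 3 \<or> w' = 3 \<and> h' = 2" "rect x' y' w' h' \<in> P"
      "x' \<le> 4" "4 < x' + w'" "y' \<le> 2" "2 < y' + h'" "x' + w' \<le> 5" "y' + h' \<le> n"
      by (rule cover[of 4 2]) (use \<open>6 \<le> n\<close> in simp_all)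
    have "x = 2 \<and> y = 2"
      using apart[OF _ k0 t(1,2)] apart[OF _ k1 t(1,2)] t t' by (elim disjE) linarith+
    then have "x = 2 \<and> y = 2 \<and> y' = 2"
      using apart[OF _ k1 t'(1,2)] t t' by (elim disjE) linarith+
    then have "x = 2 \<and> y = 2 \<and> w = 3 \<and> h = 2"
      using apart[OF t(1,2) t'(1,2)] t t' by (elim disjE) linarith+
    with t(2) show ?thesis by simp
  qed
  have k3: "rect 0 3 2 3 \<in> P"
  proof -
    obtain x y w h where t: "w = 2 \<and> h = 3 \<or> w = 3 \<and> h = 2" "rect x y w h \<in> P"
      "x \<le> 0" "0 < x + w" "y \<le> 3" "3 < y + h" "x + w \<le> 5" "y + h \<le> n"
      by (rule cover[of 0 3]) (use \<open>6 \<le> n\<close> in simp_all)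
    have "x = 0 \<and> y = 3 \<and> w = 2 \<and> h = 3"
      using apart[OF _ k0 t(1,2)] apart[OF _ k2 t(1,2)] t by (elim disjE) linarith+
    with t(2) show ?thesis by simp
  qed
  have k4: "rect 2 4 3 2 \<in> P"
  proof -
    obtain x y w h where t: "w = 2 \<and> h = 3 \<or> w = 3 \<and> h = 2" "rect x y w h \<in> P"
      "x \<le> 2" "2 < x + w" "y \<le> 4" "4 < y + h" "x + w \<le> 5" "y + h \<le> n"
      by (rule cover[of 2 4]) (use \<open>6 \<le> n\<close> in simp_all)
    obtain x' y' w' h' where t': "w' = 2 \<and> h' = 3 \<or> w' = 3 \<and> h' = 2" "rect x' y' w' h' \<in> P"
      "x' \<le> 4" "4 < x' + w'" "y' \<le> 4" "4 < y' + h'" "x' + w' \<le> 5" "y' + h' \<le> n"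
      by (rule cover[of 4 4]) (use \<open>6 \<le> n\<close> in simp_all)
    have "x = 2 \<and> y = 4"
      using apart[OF _ k2 t(1,2)] apart[OF _ k3 t(1,2)] t t' by (elim disjE) linarith+
    then have "x = 2 \<and> y = 4 \<and> y' = 4"
      using apart[OF _ k2 t'(1,2)] t t' by (elim disjE) linarith+
    then have "x = 2 \<and> y = 4 \<and> w = 3 \<and> h = 2"
      using apart[OF t(1,2) t'(1,2)] t t' by (elim disjE) linarith+
    with t(2) show ?thesis by simp
  qed
  show ?thesis
    using k0 k1 k2 k3 k4 by (simp add: block_left_def)
qed

lemma block_right_forced:
  assumes P: "P \<in> tilings 2 3 5 n" and "6 \<le> n" and k0: "rect 0 0 3 2 \<in> P"
  shows "block_right \<subseteq> P"
proof -
  note cover = tiling_covers_cell[OF P zero_less_numeral zero_less_numeral]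
  note apart = tiling_tiles_apart[OF P zero_less_numeral zero_less_numeral]
  have k1: "rect 3 0 2 3 \<in> P"
  proof -
    obtain x y w h where t: "w = 2 \<and> h = 3 \<or> w = 3 \<and> h = 2" "rect x y w h \<in> P"
      "x \<le> 3" "3 < x + w" "y \<le> 0" "0 < y + h" "x + w \<le> 5" "y + h \<le> n"
      by (rule cover[of 3 0]) (use \<open>6 \<le> n\<close> in simp_all)
    have "x = 3 \<and> y = 0 \<and> w = 2 \<and> h = 3"
      using apart[OF _ k0 t(1,2)] t by (elim disjE) linarith+
    with t(2) show ?thesis by simp
  qed
  have k2: "rect 0 2 3 2 \<in> P"
  proof -
    obtain x y w h where t: "w = 2 \<and> h = 3 \<or> w = 3 \<and> h = 2" "rect x y w h \<in> P"
      "x \<le> 0" "0 < x + w" "y \<le> 2" "2 < y + h" "x + w \<le> 5" "y + h \<le> n"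
      by (rule cover[of 0 2]) (use \<open>6 \<le> n\<close> in simp_all)
    obtain x' y' w' h' where t': "w' = 2 \<and> h' = 3 \<or> w' = 3 \<and> h' = 2" "rect x' y' w' h' \<in> P"
      "x' \<le> 2" "2 < x' + w'" "y' \<le> 2" "2 < y' + h'" "x' + w' \<le> 5" "y' + h' \<le> n"
      by (rule cover[of 2 2]) (use \<open>6 \<le> n\<close> in simp_all)
    have "x = 0 \<and> y = 2"
      using apart[OF _ k0 t(1,2)] t t' by (elim disjE) linarith+
    then have "x = 0 \<and> y = 2 \<and> y' = 2 \<and> x' + w' \<le> 3"
      using apart[OF _ k0 t'(1,2)] apart[OF _ k1 t'(1,2)] t t' by (elim disjE) linarith+
    then have "x = 0 \<and> y = 2 \<and> w = 3 \<and> h = 2"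
      using apart[OF t(1,2) t'(1,2)] t t' by (elim disjE) linarith+
    with t(2) show ?thesis by simp
  qed
  have k3: "rect 3 3 2 3 \<in> P"
  proof -
    obtain x y w h where t: "w = 2 \<and> h = 3 \<or> w = 3 \<and> h = 2" "rect x y w h \<in> P"
      "x \<le> 3" "3 < x + w" "y \<le> 3" "3 < y + h" "x + w \<le> 5" "y + h \<le> n"
      by (rule cover[of 3 3]) (use \<open>6 \<le> n\<close> in simp_all)
    have "y = 3"
      using apart[OF _ k1 t(1,2)] t by (elim disjE) linarith+
    then have "x = 3 \<and> y = 3 \<and> w = 2 \<and> h = 3"
      using apart[OF _ k2 t(1,2)] t by (elim disjE) linarith+
    with t(2) show ?thesis by simp
  qed
  have k4: "rect 0 4 3 2 \<in> P"
  proof -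
    obtain x y w h where t: "w = 2 \<and> h = 3 \<or> w = 3 \<and> h = 2" "rect x y w h \<in> P"
      "x \<le> 0" "0 < x + w" "y \<le> 4" "4 < y + h" "x + w \<le> 5" "y + h \<le> n"
      by (rule cover[of 0 4]) (use \<open>6 \<le> n\<close> in simp_all)
    obtain x' y' w' h' where t': "w' = 2 \<and> h' = 3 \<or> w' = 3 \<and> h' = 2" "rect x' y' w' h' \<in> P"
      "x' \<le> 2" "2 < x' + w'" "y' \<le> 4" "4 < y' + h'" "x' + w' \<le> 5" "y' + h' \<le> n"
      by (rule cover[of 2 4]) (use \<open>6 \<le> n\<close> in simp_all)
    have "x = 0 \<and> y = 4"
      using apart[OF _ k2 t(1,2)] t t' by (elim disjE) linarith+
    then have "x = 0 \<and> y = 4 \<and> y' = 4 \<and> x' + w' \<le> 3"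
      using apart[OF _ k2 t'(1,2)] apart[OF _ k3 t'(1,2)] t t' by (elim disjE) linarith+
    then have "x = 0 \<and> y = 4 \<and> w = 3 \<and> h = 2"
      using apart[OF t(1,2) t'(1,2)] t t' by (elim disjE) linarith+
    with t(2) show ?thesis by simp
  qed
  show ?thesis
    using k0 k1 k2 k3 k4 by (simp add: block_right_def)
qed

lemma strip_tiling_starts_with_block:
  assumes P: "P \<in> tilings 2 3 5 n" and "6 \<le> n"
  shows "block_left \<subseteq> P \<or> block_right \<subseteq> P"
  using corner_tile[OF P] block_left_forced[OF P] block_right_forced[OF P] \<open>6 \<le> n\<close> by auto

lemma card_strip_tilings_step:
  "card (tilings 2 3 5 (6 + n)) = 2 * card (tilings 2 3 5 n)"
proof -
  let ?L = "{P \<in> tilings 2 3 5 (6 + n). block_left \<subseteq> P}"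
  let ?R = "{P \<in> tilings 2 3 5 (6 + n). block_right \<subseteq> P}"
  have split: "tilings 2 3 5 (6 + n) = ?L \<union> ?R"
    using strip_tiling_starts_with_block[OF _ le_add1] by blast
  have disjoint: "?L \<inter> ?R = {}"
  proof (rule equals0I)
    fix P assume "P \<in> ?L \<inter> ?R"
    then have P: "P \<in> tilings 2 3 5 (6 + n)" and "rect 0 0 2 3 \<in> P" "rect 0 0 3 2 \<in> P"
      by (auto simp: block_left_def block_right_def)
    moreover have "rect 0 0 2 3 \<noteq> rect 0 0 3 2" "rect 0 0 2 3 \<inter> rect 0 0 3 2 \<noteq> {}"
      by (simp_all add: rect_eq_iff rect_disjoint_iff)
    ultimately show False
      using tilingsD(2)[OF P] by blast
  qed
  have finite: "finite ?L" "finite ?R"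
    by (rule finite_subset[OF _ finite_tilings], blast)+
  have "card (tilings 2 3 5 (6 + n)) = card (?L \<union> ?R)"
    using split by (rule arg_cong)
  also have "\<dots> = card ?L + card ?R"
    using finite disjoint by (rule card_Un_disjoint)
  also have "\<dots> = 2 * card (tilings 2 3 5 n)"
    using card_tilings_containing[OF _ _ block_left_tiling] card_tilings_containing[OF _ _ block_right_tiling]
    by simp
  finally show ?thesis .
qed

lemma card_strip_tilings: "card (tilings 2 3 5 (6 * k)) = 2 ^ k"
proof (induction k)
  case 0
  then show ?case
    by (simp add: tilings_height_0)
next
  case (Suc k)
  then show ?case
    using card_strip_tilings_step[of "6 * k"] by simp
qed

lemma tile_count_2_3_5: "tile_count 2 3 5 N = (if 5 dvd N then 2 ^ (N div 5) else 0)"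
proof (cases "5 dvd N")
  case True
  then obtain k where N: "N = 5 * k" ..
  have "card P = N" if "P \<in> tilings 2 3 5 (6 * k)" for P
    using card_tiling[OF that] N by simp
  then have "{P \<in> tilings 2 3 5 (6 * k). card P = N} = tilings 2 3 5 (6 * k)"
    by blast
  then show ?thesis
    using N card_strip_tilings[of k] by (simp add: tile_count_def)
next
  case False
  then have "\<not> 5 dvd 2 * 3 * N"
    by presburger
  with False show ?thesis
    by (simp add: tile_count_def)
qed

subsection \<open>The generating function\<close>

unbundle fps_syntax

lemma inverse_one_minus_X_power:
  fixes c :: "'a :: field"
  assumes "0 < k"
  shows "inverse (1 - fps_const c * fps_X ^ k) = Abs_fps (\<lambda>n. if k dvd n then c ^ (n div k) else 0)"
    (is "_ = ?G")
proof (rule fps_inverse_unique)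
  show "(1 - fps_const c * fps_X ^ k) * ?G = 1"
  proof (rule fps_ext)
    fix n
    have "((1 - fps_const c * fps_X ^ k) * ?G) $ n = ?G $ n - c * (if n < k then 0 else ?G $ (n - k))"
      by (simp add: algebra_simps fps_X_power_mult_nth)
    also have "\<dots> = (1 :: 'a fps) $ n"
    proof (cases "n < k")
      case True
      then show ?thesis
        using assms by (auto dest: dvd_imp_le)
    next
      case False
      then obtain j where n: "n = j + k"
        by (metis add.commute le_add_diff_inverse not_less)
      have "k dvd j + k \<longleftrightarrow> k dvd j" and "(j + k) div k = Suc (j div k)"
        using assms by simp_all
      then show ?thesis
        using n assms by auto
    qed
    finally show "((1 - fps_const c * fps_X ^ k) * ?G) $ n = (1 :: 'a fps) $ n" .
  qed
qed

theorem mainTheorem8: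
  shows "Abs_fps (\<lambda>N. of_nat (tile_count 2 3 5 N) :: rat) = inverse (1 - 2 * fps_X ^ 5)"
proof -
  have "inverse (1 - 2 * fps_X ^ 5) = Abs_fps (\<lambda>N. if 5 dvd N then (2 :: rat) ^ (N div 5) else 0)"
    using inverse_one_minus_X_power[of 5 "2 :: rat"] by (simp add: numeral_fps_const)
  moreover have "of_nat (tile_count 2 3 5 N) = (if 5 dvd N then (2 :: rat) ^ (N div 5) else 0)" for N
    by (simp add: tile_count_2_3_5)
  ultimately show ?thesis
    by simp
qed

end
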